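(* Let $E$ be a directed graph. The graph inverse semigroup $\mathcal S(E)$ admits a nontrivial strong grading (by some group) if and only if $E$ is nonempty and has no source vertices.
   Context: A directed graph $E=(E^0,E^1,\mathbf r,\mathbf s)$ has vertices $E^0$, edges $E^1$, source and range maps $\mathbf s,\mathbf r:E^1\to E^0$. A vertex $v$ is a source if $\mathbf r^{-1}(v)=\emptyset$. $\mathcal S(E)$ is the semigroup with zero generated by $E^0\cup E^1\cup\{e^{-1}:e\in E^1\}$ subject to: $vw=\delta_{v,w}v$ for $v,w\in E^0$; $\mathbf s(e)e=e\mathbf r(e)=e$; $\mathbf r(e)e^{-1}=e^{-1}\mathbf s(e)=e^{-1}$; $e^{-1}f=\delta_{e,f}\mathbf r(e)$ for $e,f\in E^1$. A $\Gamma$-grading of a semigroup $S$ with zero is a map $\deg:S\setminus\{0\}\to\Gamma$ with $\deg(st)=\deg(s)\deg(t)$ whenever $st\neq0$; $S_\alpha=\deg^{-1}(\alpha)\cup\{0\}$. It is trivial if $S_\alpha=\{0\}$ for all $\alpha\neq\varepsilon$ (the identity of $\Gamma$), and strong if $S_\alpha S_\beta=S_{\alpha\beta}$ for all $\alpha,\beta\in\Gamma$. *)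

theory Defs
  imports "HOL-Algebra.Group"
begin

text \<open>A directed graph E = (V, Ed, rg, sc): vertex set V, edge set Ed,
  range map rg and source map sc.  The graph inverse semigroup S(E) is the
  semigroup with zero presented by generators and relations.  We realise it as
  words over the generator alphabet modulo the congruence generated by the
  defining relations, with an adjoined zero (represented by None).\<close>

datatype ('v, 'e) gen = GV 'v | GE 'e | GI 'e

definition gis_gens :: "'v set \<Rightarrow> 'e set \<Rightarrow> ('v, 'e) gen set" where
  "gis_gens V Ed = GV ` V \<union> GE ` Ed \<union> GI ` Ed"

definition gis_word :: "'v set \<Rightarrow> 'e set \<Rightarrow> ('v, 'e) gen list \<Rightarrow> bool" where
  "gis_word V Ed w \<longleftrightarrow> w \<noteq> [] \<and> set w \<subseteq> gis_gens V Ed"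

inductive gis_rel :: "'v set \<Rightarrow> 'e set \<Rightarrow> ('e \<Rightarrow> 'v) \<Rightarrow> ('e \<Rightarrow> 'v)
    \<Rightarrow> ('v, 'e) gen list \<Rightarrow> ('v, 'e) gen list option \<Rightarrow> bool"
  for V Ed rg sc where
  vv_eq: "v \<in> V \<Longrightarrow> gis_rel V Ed rg sc [GV v, GV v] (Some [GV v])"
| vv_ne: "v \<in> V \<Longrightarrow> w \<in> V \<Longrightarrow> v \<noteq> w \<Longrightarrow> gis_rel V Ed rg sc [GV v, GV w] None"
| se: "e \<in> Ed \<Longrightarrow> gis_rel V Ed rg sc [GV (sc e), GE e] (Some [GE e])"
| er: "e \<in> Ed \<Longrightarrow> gis_rel V Ed rg sc [GE e, GV (rg e)] (Some [GE e])"
| ri: "e \<in> Ed \<Longrightarrow> gis_rel V Ed rg sc [GV (rg e), GI e] (Some [GI e])"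
| isv: "e \<in> Ed \<Longrightarrow> gis_rel V Ed rg sc [GI e, GV (sc e)] (Some [GI e])"
| ie_eq: "e \<in> Ed \<Longrightarrow> gis_rel V Ed rg sc [GI e, GE e] (Some [GV (rg e)])"
| ie_ne: "e \<in> Ed \<Longrightarrow> f \<in> Ed \<Longrightarrow> e \<noteq> f \<Longrightarrow> gis_rel V Ed rg sc [GI e, GE f] None"

text \<open>The congruence on (free semigroup with zero) generated by the relations:
  equivalence closure of applying a relation inside an arbitrary context u _ w;
  zero is absorbing, so a word containing a subword equal to zero is zero.\<close>
inductive gis_eq :: "'v set \<Rightarrow> 'e set \<Rightarrow> ('e \<Rightarrow> 'v) \<Rightarrow> ('e \<Rightarrow> 'v)
    \<Rightarrow> ('v, 'e) gen list option \<Rightarrow> ('v, 'e) gen list option \<Rightarrow> bool"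
  for V Ed rg sc where
  refl: "gis_eq V Ed rg sc x x"
| sym: "gis_eq V Ed rg sc x y \<Longrightarrow> gis_eq V Ed rg sc y x"
| trans: "gis_eq V Ed rg sc x y \<Longrightarrow> gis_eq V Ed rg sc y z \<Longrightarrow> gis_eq V Ed rg sc x z"
| step: "gis_rel V Ed rg sc l r \<Longrightarrow>
     gis_eq V Ed rg sc (Some (u @ l @ w)) (map_option (\<lambda>y. u @ y @ w) r)"

definition gis_zero :: "'v set \<Rightarrow> 'e set \<Rightarrow> ('e \<Rightarrow> 'v) \<Rightarrow> ('e \<Rightarrow> 'v)
    \<Rightarrow> ('v, 'e) gen list \<Rightarrow> bool" where
  "gis_zero V Ed rg sc w \<longleftrightarrow> gis_eq V Ed rg sc (Some w) None"

definition gis_nz :: "'v set \<Rightarrow> 'e set \<Rightarrow> ('e \<Rightarrow> 'v) \<Rightarrow> ('e \<Rightarrow> 'v)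
    \<Rightarrow> ('v, 'e) gen list \<Rightarrow> bool" where
  "gis_nz V Ed rg sc w \<longleftrightarrow> gis_word V Ed w \<and> \<not> gis_zero V Ed rg sc w"

text \<open>A G-grading of S(E): a map deg on the nonzero elements (given on
  representative words, constant on equivalence classes) into the group G,
  with deg(st) = deg(s) deg(t) whenever st is nonzero.\<close>
definition gis_grading :: "('g, 'm) monoid_scheme \<Rightarrow> 'v set \<Rightarrow> 'e set \<Rightarrow> ('e \<Rightarrow> 'v) \<Rightarrow> ('e \<Rightarrow> 'v)
    \<Rightarrow> (('v, 'e) gen list \<Rightarrow> 'g) \<Rightarrow> bool" where
  "gis_grading G V Ed rg sc deg \<longleftrightarrow>
     group G \<and>
     (\<forall>w. gis_nz V Ed rg sc w \<longrightarrow> deg w \<in> carrier G) \<and>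
     (\<forall>u w. gis_nz V Ed rg sc u \<and> gis_nz V Ed rg sc w \<and> gis_eq V Ed rg sc (Some u) (Some w)
            \<longrightarrow> deg u = deg w) \<and>
     (\<forall>u w. gis_nz V Ed rg sc u \<and> gis_nz V Ed rg sc w \<and> gis_nz V Ed rg sc (u @ w)
            \<longrightarrow> deg (u @ w) = deg u \<otimes>\<^bsub>G\<^esub> deg w)"

definition gis_grading_trivial :: "('g, 'm) monoid_scheme \<Rightarrow> 'v set \<Rightarrow> 'e set \<Rightarrow> ('e \<Rightarrow> 'v) \<Rightarrow> ('e \<Rightarrow> 'v)
    \<Rightarrow> (('v, 'e) gen list \<Rightarrow> 'g) \<Rightarrow> bool" where
  "gis_grading_trivial G V Ed rg sc deg \<longleftrightarrow>
     (\<forall>w. gis_nz V Ed rg sc w \<longrightarrow> deg w = \<one>\<^bsub>G\<^esub>)"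

text \<open>Strong grading: S_a S_b = S_(ab) for all a, b in G, where
  S_a = (nonzero elements of degree a) together with 0.  Since 0 lies in both
  sides, this is: every nonzero element of degree ab is a product of a nonzero
  element of degree a and one of degree b, and every nonzero such product has
  degree ab.\<close>
definition gis_grading_strong :: "('g, 'm) monoid_scheme \<Rightarrow> 'v set \<Rightarrow> 'e set \<Rightarrow> ('e \<Rightarrow> 'v) \<Rightarrow> ('e \<Rightarrow> 'v)
    \<Rightarrow> (('v, 'e) gen list \<Rightarrow> 'g) \<Rightarrow> bool" where
  "gis_grading_strong G V Ed rg sc deg \<longleftrightarrow>
     (\<forall>a\<in>carrier G. \<forall>b\<in>carrier G.
        (\<forall>x. gis_nz V Ed rg sc x \<and> deg x = a \<otimes>\<^bsub>G\<^esub> b \<longrightarrow>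
           (\<exists>y z. gis_nz V Ed rg sc y \<and> gis_nz V Ed rg sc z \<and> deg y = a \<and> deg z = b \<and>
                  gis_eq V Ed rg sc (Some (y @ z)) (Some x))) \<and>
        (\<forall>y z. gis_nz V Ed rg sc y \<and> gis_nz V Ed rg sc z \<and> deg y = a \<and> deg z = b \<and>
               gis_nz V Ed rg sc (y @ z) \<longrightarrow> deg (y @ z) = a \<otimes>\<^bsub>G\<^esub> b))"

definition nontrivial_strong_grading :: "('g, 'm) monoid_scheme \<Rightarrow> 'v set \<Rightarrow> 'e set \<Rightarrow> ('e \<Rightarrow> 'v) \<Rightarrow> ('e \<Rightarrow> 'v)
    \<Rightarrow> (('v, 'e) gen list \<Rightarrow> 'g) \<Rightarrow> bool" where
  "nontrivial_strong_grading G V Ed rg sc deg \<longleftrightarrow>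
     gis_grading G V Ed rg sc deg \<and> \<not> gis_grading_trivial G V Ed rg sc deg \<and>
     gis_grading_strong G V Ed rg sc deg"

definition is_source :: "'v set \<Rightarrow> 'e set \<Rightarrow> ('e \<Rightarrow> 'v) \<Rightarrow> 'v \<Rightarrow> bool" where
  "is_source V Ed rg v \<longleftrightarrow> v \<in> V \<and> (\<forall>e\<in>Ed. rg e \<noteq> v)"

end

theory Submission
  imports Defs
begin

text \<open>Both directions rest on the action of S(E) on finite paths of E.  If v is a source,
  the only element mapping some path to the trivial path at v is v itself; as v is
  idempotent it has degree 1, so in a strong grading the factorisation v = y z with y of an
  arbitrary degree a forces a = 1.  Conversely, counting the letters e and e\<inverse> modulo 2 is
  a grading, and it is strong when no vertex is a source: any nonzero x ends in some vertex u,
  so x = x u = (x f\<inverse>) f for an edge f with range u.\<close>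

declare gis_eq.trans [trans]

lemma gis_eq_context:
  "gis_eq V Ed rg sc x y \<Longrightarrow>
   gis_eq V Ed rg sc (map_option (\<lambda>w. u @ w @ u') x) (map_option (\<lambda>w. u @ w @ u') y)"
proof (induction rule: gis_eq.induct)
  case (step l r v w)
  from gis_eq.step[OF step, of "u @ v" "w @ u'"] show ?case
    by (simp add: option.map_comp o_def)
qed (auto intro: gis_eq.intros)

lemma gis_eq_context_Some:
  "gis_eq V Ed rg sc (Some a) (Some b) \<Longrightarrow>
   gis_eq V Ed rg sc (Some (u @ a @ w)) (Some (u @ b @ w))"
  using gis_eq_context[of V Ed rg sc "Some a" "Some b" u w] by simp

lemma gis_zero_context: "gis_zero V Ed rg sc a \<Longrightarrow> gis_zero V Ed rg sc (u @ a @ w)"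
  using gis_eq_context[of V Ed rg sc "Some a" None u w] by (simp add: gis_zero_def)

lemma gis_eq_rel:
  "gis_rel V Ed rg sc l (Some r) \<Longrightarrow> gis_eq V Ed rg sc (Some (u @ l @ w)) (Some (u @ r @ w))"
  using gis_eq.step by fastforce

lemma gis_eq_vertex_idem: "v \<in> V \<Longrightarrow> gis_eq V Ed rg sc (Some [GV v, GV v]) (Some [GV v])"
  using gis_eq_rel[OF gis_rel.vv_eq, of v V Ed rg sc "[]" "[]"] by simp

lemma gis_zero_cong:
  "gis_eq V Ed rg sc (Some x) (Some y) \<Longrightarrow> gis_zero V Ed rg sc x = gis_zero V Ed rg sc y"
  unfolding gis_zero_def by (meson gis_eq.sym gis_eq.trans)

lemma gis_eq_nonzero_factors:
  assumes "gis_eq V Ed rg sc (Some (y @ z)) (Some x)" "\<not> gis_zero V Ed rg sc x"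
  shows "\<not> gis_zero V Ed rg sc y" "\<not> gis_zero V Ed rg sc z"
  using gis_zero_context[of V Ed rg sc y "[]" z] gis_zero_context[of V Ed rg sc z y "[]"]
    gis_zero_cong[OF assms(1)] assms(2) by auto

lemma gis_rel_right_vertex:
  assumes "g \<in> gis_gens V Ed" and graph: "\<forall>e\<in>Ed. sc e \<in> V \<and> rg e \<in> V"
  shows "\<exists>u\<in>V. gis_rel V Ed rg sc [g, GV u] (Some [g])"
  using assms by (cases g) (auto simp: gis_gens_def intro: gis_rel.intros)

lemma gis_word_right_vertex:
  assumes "gis_word V Ed x" and graph: "\<forall>e\<in>Ed. sc e \<in> V \<and> rg e \<in> V"
  shows "\<exists>u\<in>V. gis_eq V Ed rg sc (Some (x @ [GV u])) (Some x)"
proof -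
  obtain x' g where x: "x = x' @ [g]"
    using assms(1) unfolding gis_word_def by (metis rev_exhaust)
  then have "g \<in> gis_gens V Ed"
    using assms(1) unfolding gis_word_def by auto
  then obtain u where "u \<in> V" "gis_rel V Ed rg sc [g, GV u] (Some [g])"
    using gis_rel_right_vertex graph by blast
  with gis_eq_rel[of V Ed rg sc _ _ x' "[]"] show ?thesis
    using x by fastforce
qed

lemma gis_word_ghost_edge_factor:
  assumes "gis_word V Ed x" and graph: "\<forall>e\<in>Ed. sc e \<in> V \<and> rg e \<in> V"
    and no_source: "\<forall>v. \<not> is_source V Ed rg v"
  shows "\<exists>f\<in>Ed. gis_eq V Ed rg sc (Some ((x @ [GI f]) @ [GE f])) (Some x)"
proof -
  obtain u where u: "u \<in> V" "gis_eq V Ed rg sc (Some (x @ [GV u])) (Some x)"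
    using gis_word_right_vertex[OF assms(1) graph] by blast
  obtain f where f: "f \<in> Ed" "rg f = u"
    using no_source u(1) by (auto simp: is_source_def)
  have "gis_eq V Ed rg sc (Some ((x @ [GI f]) @ [GE f])) (Some (x @ [GV (rg f)]))"
    using gis_eq_rel[OF gis_rel.ie_eq[OF f(1)], where u = x and w = "[]"] by simp
  also have "gis_eq V Ed rg sc \<dots> (Some x)"
    using u(2) f(2) by simp
  finally show ?thesis
    using f(1) by blast
qed

text \<open>A path is represented by its source vertex and its list of edges; e prepends the
  edge e and e\<inverse> removes a leading e.  Words act from their right end.\<close>

type_synonym ('v, 'e) path = "'v \<times> 'e list"

fun act_gen :: "('e \<Rightarrow> 'v) \<Rightarrow> ('e \<Rightarrow> 'v) \<Rightarrow> ('v, 'e) gen \<Rightarrow> ('v, 'e) path \<Rightarrow> ('v, 'e) path option"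
  where
  "act_gen rg sc (GV v) (s, p) = (if s = v then Some (s, p) else None)"
| "act_gen rg sc (GE e) (s, p) = (if s = rg e then Some (sc e, e # p) else None)"
| "act_gen rg sc (GI e) (s, p) =
     (if s = sc e \<and> p \<noteq> [] \<and> hd p = e then Some (rg e, tl p) else None)"

fun act_word ::
  "('e \<Rightarrow> 'v) \<Rightarrow> ('e \<Rightarrow> 'v) \<Rightarrow> ('v, 'e) gen list \<Rightarrow> ('v, 'e) path \<Rightarrow> ('v, 'e) path option"
  where
  "act_word rg sc [] s = Some s"
| "act_word rg sc (g # w) s = Option.bind (act_word rg sc w s) (act_gen rg sc g)"

fun act ::
  "('e \<Rightarrow> 'v) \<Rightarrow> ('e \<Rightarrow> 'v) \<Rightarrow> ('v, 'e) gen list option \<Rightarrow> ('v, 'e) path \<Rightarrow> ('v, 'e) path option"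
  where
  "act rg sc None = (\<lambda>_. None)"
| "act rg sc (Some w) = act_word rg sc w"

lemma act_word_append:
  "act_word rg sc (u @ w) s = Option.bind (act_word rg sc w s) (act_word rg sc u)"
  by (induction u) (auto simp: bind_assoc)

lemma act_gis_rel: "gis_rel V Ed rg sc l r \<Longrightarrow> act_word rg sc l = act rg sc r"
  by (induction rule: gis_rel.induct) (auto simp: fun_eq_iff split: bind_split)

lemma act_gis_eq: "gis_eq V Ed rg sc x y \<Longrightarrow> act rg sc x = act rg sc y"
proof (induction rule: gis_eq.induct)
  case (step l r u w)
  then show ?case
    by (cases r) (auto simp: fun_eq_iff act_word_append act_gis_rel[OF step] split: bind_split)
qed simp_all

lemma act_word_imp_not_zero: "act_word rg sc w s \<noteq> None \<Longrightarrow> \<not> gis_zero V Ed rg sc w"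
  unfolding gis_zero_def by (metis act.simps act_gis_eq)

lemma gis_nz_vertex: "v \<in> V \<Longrightarrow> gis_nz V Ed rg sc [GV v]"
  by (auto simp: gis_nz_def gis_word_def gis_gens_def
      intro!: act_word_imp_not_zero[of _ _ _ "(v, [])"])

lemma gis_nz_edge: "e \<in> Ed \<Longrightarrow> gis_nz V Ed rg sc [GE e]"
  by (auto simp: gis_nz_def gis_word_def gis_gens_def
      intro!: act_word_imp_not_zero[of _ _ _ "(rg e, [])"])

text \<open>If v is a source, the last letter applied to reach the trivial path at v cannot be an
  edge (the path would be nonempty) or a ghost edge (v would be a range), so it is v, and v
  was reached already.\<close>

lemma act_word_onto_source:
  assumes "set y \<subseteq> gis_gens V Ed" "y \<noteq> []" "act_word rg sc y s = Some (v, [])"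
    and source: "\<forall>e\<in>Ed. rg e \<noteq> v"
  shows "gis_eq V Ed rg sc (Some y) (Some [GV v])"
  using assms(1-3)
proof (induction y)
  case (Cons g y)
  then obtain t where t: "act_word rg sc y s = Some t" "act_gen rg sc g t = Some (v, [])"
    by (auto split: bind_split_asm)
  have g: "g = GV v \<and> t = (v, [])"
    using Cons.prems(1) t(2) source by (cases g; cases t) (auto simp: gis_gens_def split: if_splits)
  then have v: "v \<in> V"
    using Cons.prems(1) by (auto simp: gis_gens_def)
  show ?case
  proof (cases "y = []")
    case False
    then have "gis_eq V Ed rg sc (Some y) (Some [GV v])"
      using Cons g t by auto
    then have "gis_eq V Ed rg sc (Some ([GV v] @ y)) (Some [GV v, GV v])"
      using gis_eq_context_Some[of V Ed rg sc y "[GV v]" "[GV v]" "[]"] by simp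
    also have "gis_eq V Ed rg sc \<dots> (Some [GV v])"
      using v by (rule gis_eq_vertex_idem)
    finally show ?thesis using g by simp
  qed (use g in \<open>simp add: gis_eq.refl\<close>)
qed simp

lemma
  assumes "gis_grading G V Ed rg sc deg"
  shows gis_grading_group: "group G"
    and gis_grading_closed: "gis_nz V Ed rg sc w \<Longrightarrow> deg w \<in> carrier G"
    and gis_grading_cong: "\<lbrakk>gis_nz V Ed rg sc u; gis_nz V Ed rg sc w;
           gis_eq V Ed rg sc (Some u) (Some w)\<rbrakk> \<Longrightarrow> deg u = deg w"
    and gis_grading_mult: "\<lbrakk>gis_nz V Ed rg sc u; gis_nz V Ed rg sc w;
           gis_nz V Ed rg sc (u @ w)\<rbrakk> \<Longrightarrow> deg (u @ w) = deg u \<otimes>\<^bsub>G\<^esub> deg w"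
  using assms unfolding gis_grading_def by blast+

lemma gis_grading_factor:
  assumes grading: "gis_grading G V Ed rg sc deg"
    and yz: "gis_eq V Ed rg sc (Some (y @ z)) (Some x)" and x: "gis_nz V Ed rg sc x"
    and words: "gis_word V Ed y" "gis_word V Ed z"
  shows "gis_nz V Ed rg sc y" "gis_nz V Ed rg sc z" "deg y \<otimes>\<^bsub>G\<^esub> deg z = deg x"
proof -
  have "\<not> gis_zero V Ed rg sc x"
    using x by (simp add: gis_nz_def)
  then have nz: "gis_nz V Ed rg sc y" "gis_nz V Ed rg sc z" "gis_nz V Ed rg sc (y @ z)"
    using gis_eq_nonzero_factors[OF yz] gis_zero_cong[OF yz] words
    by (auto simp: gis_nz_def gis_word_def)
  then show "gis_nz V Ed rg sc y" "gis_nz V Ed rg sc z" "deg y \<otimes>\<^bsub>G\<^esub> deg z = deg x"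
    using gis_grading_mult[OF grading nz] gis_grading_cong[OF grading nz(3) x yz] by simp_all
qed

lemma gis_grading_vertex_degree:
  assumes grading: "gis_grading G V Ed rg sc deg" and v: "v \<in> V"
  shows "deg [GV v] = \<one>\<^bsub>G\<^esub>"
proof -
  interpret group G
    using grading by (rule gis_grading_group)
  have nz: "gis_nz V Ed rg sc [GV v]" "gis_nz V Ed rg sc ([GV v] @ [GV v])"
    using gis_nz_vertex[OF v, of Ed rg sc] gis_zero_cong[OF gis_eq_vertex_idem[OF v, of Ed rg sc]]
    by (auto simp: gis_nz_def gis_word_def)
  have "deg [GV v] \<otimes>\<^bsub>G\<^esub> deg [GV v] = deg ([GV v] @ [GV v])"
    using gis_grading_mult[OF grading nz(1,1,2)] ..
  also have "\<dots> = deg [GV v]"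
    using gis_grading_cong[OF grading nz(2,1)] gis_eq_vertex_idem[OF v, of Ed rg sc] by simp
  finally show ?thesis
    using gis_grading_closed[OF grading nz(1)] by simp
qed

lemma strong_grading_source_imp_trivial:
  assumes grading: "gis_grading G V Ed rg sc deg" and strong: "gis_grading_strong G V Ed rg sc deg"
    and source: "is_source V Ed rg v"
  shows "gis_grading_trivial G V Ed rg sc deg"
  unfolding gis_grading_trivial_def
proof (intro allI impI)
  interpret group G
    using grading by (rule gis_grading_group)
  fix x
  assume x: "gis_nz V Ed rg sc x"
  define a where "a = deg x"
  have a: "a \<in> carrier G"
    using gis_grading_closed[OF grading x] by (simp add: a_def)
  have v: "v \<in> V" "gis_nz V Ed rg sc [GV v]" "deg [GV v] = a \<otimes>\<^bsub>G\<^esub> inv\<^bsub>G\<^esub> a"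
    using source gis_grading_vertex_degree[OF grading] gis_nz_vertex a
    by (auto simp: is_source_def)
  then obtain y z where y: "gis_nz V Ed rg sc y" "deg y = a"
    and yz: "gis_eq V Ed rg sc (Some (y @ z)) (Some [GV v])"
    using strong a unfolding gis_grading_strong_def by (meson inv_closed)
  have "act_word rg sc (y @ z) (v, []) = Some (v, [])"
    using act_gis_eq[OF yz] by simp
  then obtain t where "act_word rg sc y t = Some (v, [])"
    by (auto simp: act_word_append split: bind_split_asm)
  then have "gis_eq V Ed rg sc (Some y) (Some [GV v])"
    using y(1) source
    by (intro act_word_onto_source) (auto simp: gis_nz_def gis_word_def is_source_def)
  then have "a = deg [GV v]"
    using gis_grading_cong[OF grading y(1) v(2)] y(2) by simp
  then show "deg x = \<one>\<^bsub>G\<^esub>"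
    using gis_grading_vertex_degree[OF grading v(1)] by (simp add: a_def)
qed

lemma nontrivial_grading_vertices_nonempty:
  assumes graph: "\<forall>e\<in>Ed. sc e \<in> V \<and> rg e \<in> V"
    and "\<not> gis_grading_trivial G V Ed rg sc deg"
  shows "V \<noteq> {}"
proof -
  obtain x where "gis_nz V Ed rg sc x"
    using assms(2) by (auto simp: gis_grading_trivial_def)
  then have "gis_gens V Ed \<noteq> {}"
    by (auto simp: gis_nz_def gis_word_def neq_Nil_conv)
  with graph show ?thesis
    by (auto simp: gis_gens_def)
qed

fun is_vertex :: "('v, 'e) gen \<Rightarrow> bool" where
  "is_vertex (GV v) = True"
| "is_vertex (GE e) = False"
| "is_vertex (GI e) = False"

definition edge_count :: "('v, 'e) gen list \<Rightarrow> nat" where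
  "edge_count w = length [g \<leftarrow> w. \<not> is_vertex g]"

lemma edge_count_append [simp]: "edge_count (u @ w) = edge_count u + edge_count w"
  by (simp add: edge_count_def)

lemma gis_rel_edge_count_parity:
  "gis_rel V Ed rg sc l (Some r) \<Longrightarrow> even (edge_count l) = even (edge_count r)"
  by (cases rule: gis_rel.cases) (auto simp: edge_count_def)

lemma gis_eq_edge_count_parity:
  "gis_eq V Ed rg sc x y \<Longrightarrow> \<not> gis_eq V Ed rg sc x None \<Longrightarrow>
   map_option (\<lambda>w. even (edge_count w)) x = map_option (\<lambda>w. even (edge_count w)) y"
proof (induction rule: gis_eq.induct)
  case (sym x y)
  have "\<not> gis_eq V Ed rg sc x None"
    using gis_eq.sym[OF sym.hyps] sym.prems gis_eq.trans by blast
  then show ?case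
    using sym.IH by simp
next
  case (trans x y z)
  have "\<not> gis_eq V Ed rg sc y None"
    using trans.hyps trans.prems gis_eq.trans by blast
  then show ?case
    using trans.IH trans.prems by simp
next
  case (step l r u w)
  then obtain m where "r = Some m"
    using gis_eq.step by fastforce
  with step.hyps show ?case
    by (auto dest: gis_rel_edge_count_parity)
qed simp

text \<open>The cyclic group of order 2, realised as {{}, UNIV} under symmetric difference so that
  its elements are sets, as the grading group of the theorem must be.\<close>

definition parity_group :: "'a set monoid" where
  "parity_group = \<lparr>carrier = {{}, UNIV}, mult = (\<lambda>A B. (A \<union> B) - (A \<inter> B)), one = {}\<rparr>"

lemma group_parity_group: "group parity_group"
  by (rule groupI) (auto simp: parity_group_def)

definition parity_degree :: "('v, 'e) gen list \<Rightarrow> 'a set" where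
  "parity_degree w = (if even (edge_count w) then {} else UNIV)"

lemma parity_degree_append:
  "parity_degree (u @ w) = parity_degree u \<otimes>\<^bsub>parity_group\<^esub> parity_degree w"
  by (simp add: parity_degree_def parity_group_def)

lemma parity_degree_in_carrier: "parity_degree w \<in> carrier parity_group"
  by (simp add: parity_degree_def parity_group_def)

lemma gis_grading_parity: "gis_grading (parity_group :: 'a set monoid) V Ed rg sc parity_degree"
  unfolding gis_grading_def
proof (intro conjI allI impI group_parity_group)
  fix u w
  assume "gis_nz V Ed rg sc u \<and> gis_nz V Ed rg sc w \<and> gis_eq V Ed rg sc (Some u) (Some w)"
  then have "even (edge_count u) = even (edge_count w)"
    using gis_eq_edge_count_parity[of V Ed rg sc "Some u" "Some w"]
    unfolding gis_nz_def gis_zero_def by simp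
  then show "parity_degree u = parity_degree w"
    by (simp add: parity_degree_def)
next
  fix w :: "('v, 'e) gen list"
  show "parity_degree w \<in> carrier parity_group"
    by (rule parity_degree_in_carrier)
next
  fix u w :: "('v, 'e) gen list"
  show "parity_degree (u @ w) = parity_degree u \<otimes>\<^bsub>parity_group\<^esub> parity_degree w"
    by (rule parity_degree_append)
qed

lemma parity_grading_nontrivial:
  assumes "e \<in> Ed"
  shows "\<not> gis_grading_trivial parity_group V Ed rg sc parity_degree"
proof -
  have "parity_degree [GE e] \<noteq> \<one>\<^bsub>parity_group\<^esub>"
    by (simp add: parity_degree_def parity_group_def edge_count_def)
  then show ?thesis
    using gis_nz_edge[OF assms, of V rg sc] unfolding gis_grading_trivial_def by auto
qed

lemma gis_word_factor_parity:
  assumes graph: "\<forall>e\<in>Ed. sc e \<in> V \<and> rg e \<in> V" and no_source: "\<forall>v. \<not> is_source V Ed rg v"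
    and x: "gis_word V Ed x" and b: "b \<in> carrier parity_group"
  shows "\<exists>y z. gis_eq V Ed rg sc (Some (y @ z)) (Some x) \<and> gis_word V Ed y \<and> gis_word V Ed z
      \<and> parity_degree z = b"
proof (cases "b = {}")
  case True
  obtain u where u: "u \<in> V" "gis_eq V Ed rg sc (Some (x @ [GV u])) (Some x)"
    using gis_word_right_vertex[OF x graph] by blast
  have "gis_word V Ed [GV u]" "parity_degree [GV u] = b"
    using u(1) True by (simp_all add: gis_word_def gis_gens_def parity_degree_def edge_count_def)
  with u(2) x show ?thesis
    by blast
next
  case False
  obtain f where f: "f \<in> Ed" "gis_eq V Ed rg sc (Some ((x @ [GI f]) @ [GE f])) (Some x)"
    using gis_word_ghost_edge_factor[OF x graph no_source] by blast
  have "gis_word V Ed (x @ [GI f])" "gis_word V Ed [GE f]" "parity_degree [GE f] = b"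
    using x f(1) b False
    by (auto simp: gis_word_def gis_gens_def parity_group_def parity_degree_def edge_count_def)
  with f(2) show ?thesis
    by blast
qed

lemma parity_grading_strong:
  assumes graph: "\<forall>e\<in>Ed. sc e \<in> V \<and> rg e \<in> V" and no_source: "\<forall>v. \<not> is_source V Ed rg v"
  shows "gis_grading_strong (parity_group :: 'a set monoid) V Ed rg sc parity_degree"
  unfolding gis_grading_strong_def
proof (intro ballI conjI allI impI)
  fix a b :: "'a set" and y z
  assume "gis_nz V Ed rg sc y \<and> gis_nz V Ed rg sc z \<and> parity_degree y = a \<and> parity_degree z = b
    \<and> gis_nz V Ed rg sc (y @ z)"
  then show "parity_degree (y @ z) = a \<otimes>\<^bsub>parity_group\<^esub> b"
    by (metis parity_degree_append)
next
  interpret group parity_group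
    by (rule group_parity_group)
  fix a b :: "'a set" and x
  assume a: "a \<in> carrier parity_group" and b: "b \<in> carrier parity_group"
    and "gis_nz V Ed rg sc x \<and> parity_degree x = a \<otimes>\<^bsub>parity_group\<^esub> b"
  then have x: "gis_nz V Ed rg sc x" "gis_word V Ed x"
    and deg_x: "parity_degree x = a \<otimes>\<^bsub>parity_group\<^esub> b"
    by (simp_all add: gis_nz_def)
  obtain y z where yz: "gis_eq V Ed rg sc (Some (y @ z)) (Some x)"
    and words: "gis_word V Ed y" "gis_word V Ed z" and deg_z: "parity_degree z = b"
    using gis_word_factor_parity[OF graph no_source x(2) b] by blast
  note factor = gis_grading_factor[OF gis_grading_parity[where 'a = 'a] yz x(1) words]
  then have "parity_degree y \<otimes>\<^bsub>parity_group\<^esub> b = a \<otimes>\<^bsub>parity_group\<^esub> b"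
    using deg_x deg_z by simp
  then have "parity_degree y = a"
    using right_cancel[OF b parity_degree_in_carrier a] by blast
  then show "\<exists>y z. gis_nz V Ed rg sc y \<and> gis_nz V Ed rg sc z \<and> parity_degree y = a
      \<and> parity_degree z = b \<and> gis_eq V Ed rg sc (Some (y @ z)) (Some x)"
    using factor yz deg_z by blast
qed

lemma parity_nontrivial_strong_grading:
  assumes graph: "\<forall>e\<in>Ed. sc e \<in> V \<and> rg e \<in> V"
    and "V \<noteq> {}" and no_source: "\<forall>v. \<not> is_source V Ed rg v"
  shows "nontrivial_strong_grading (parity_group :: 'a set monoid) V Ed rg sc parity_degree"
proof -
  obtain e where "e \<in> Ed"
    using assms(2,3) by (auto simp: is_source_def)
  then show ?thesis
    unfolding nontrivial_strong_grading_def
    by (intro conjI gis_grading_parity parity_grading_nontrivial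
        parity_grading_strong[OF graph no_source])
qed

theorem theorem8p8:
  fixes V :: "'v set" and Ed :: "'e set" and rg sc :: "'e \<Rightarrow> 'v"
  assumes graph: "\<forall>e\<in>Ed. sc e \<in> V \<and> rg e \<in> V"
  shows "(\<forall>(G :: 'g monoid) deg. nontrivial_strong_grading G V Ed rg sc deg
            \<longrightarrow> V \<noteq> {} \<and> (\<forall>v. \<not> is_source V Ed rg v))
       \<and> (V \<noteq> {} \<and> (\<forall>v. \<not> is_source V Ed rg v)
            \<longrightarrow> (\<exists>(G :: ('v, 'e) gen list set monoid) deg. nontrivial_strong_grading G V Ed rg sc deg))"
proof (rule conjI; intro allI impI)
  fix G :: "'g monoid" and deg
  assume "nontrivial_strong_grading G V Ed rg sc deg"
  then have grading: "gis_grading G V Ed rg sc deg" and strong: "gis_grading_strong G V Ed rg sc deg"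
    and nontrivial: "\<not> gis_grading_trivial G V Ed rg sc deg"
    by (simp_all add: nontrivial_strong_grading_def)
  then show "V \<noteq> {} \<and> (\<forall>v. \<not> is_source V Ed rg v)"
    using nontrivial_grading_vertices_nonempty[OF graph nontrivial]
      strong_grading_source_imp_trivial[OF grading strong]
    by blast
next
  assume "V \<noteq> {} \<and> (\<forall>v. \<not> is_source V Ed rg v)"
  then have "nontrivial_strong_grading (parity_group :: ('v, 'e) gen list set monoid)
      V Ed rg sc parity_degree"
    by (intro parity_nontrivial_strong_grading[OF graph]) simp_all
  then show "\<exists>(G :: ('v, 'e) gen list set monoid) deg. nontrivial_strong_grading G V Ed rg sc deg"
    by blast
qed

end
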